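(* Let $A \in \mathbb{R}^{m \times n_A}$ and $B \in \mathbb{R}^{m \times n_B}$ with nonzero columns, let $OPT$ be a set of $k$ columns of $B$ maximizing $f_A$ among all $k$-sets of columns of $B$, with $\sigma_{\min}(OPT) > 0$. Let $T_1, \dots, T_\ell$ be any partition of the columns of $B$, let $k' = \frac{32k}{\sigma_{\min}(OPT)}$, let $S_i = \textsc{Greedy}(A, T_i, k')$, and let $$OPT_i^{NS} = \{x \in OPT : x \notin \textsc{Greedy}(A, T_i \cup \{x\}, k')\}.$$ Then $f_A(S_i) \ge \frac{f_A(OPT_i^{NS})}{2}$ for all $i$.
   Context: For a finite set $V$ of vectors in $\mathbb{R}^m$, $\Pi_V$ is the orthogonal projector onto $\mathrm{span}(V)$ and, for a matrix $M$ with $m$ rows, $f_M(V) = \|\Pi_V M\|_F^2$. For a finite set $V$ of nonzero vectors, $\sigma_{\min}(V)$ is the smallest squared singular value of the matrix whose columns are the vectors of $V$ rescaled to unit length. $\textsc{Greedy}(A, C, r)$ (for a set of columns $C$): start with $S = \emptyset$; for $r$ steps (or until $C$ is exhausted), add to $S$ a column $c \in C$ maximizing $f_A(S \cup \{c\})$ (ties broken by a fixed deterministic rule); return $S$. *)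

theory Defs
  imports "HOL-Analysis.Analysis"
begin

definition proj_span :: "('a::euclidean_space) set \<Rightarrow> 'a \<Rightarrow> 'a" where
  "proj_span V a = (THE p. p \<in> span V \<and> (\<forall>v\<in>span V. (a - p) \<bullet> v = 0))"

definition fM :: "real^'n^'m \<Rightarrow> (real^'m) set \<Rightarrow> real" where
  "fM M V = (\<Sum>j\<in>UNIV. (norm (proj_span V (column j M)))\<^sup>2)"

definition cols :: "real^'n^'m \<Rightarrow> 'n set \<Rightarrow> (real^'m) set" where
  "cols B S = (\<lambda>j. column j B) ` S"

text \<open>Smallest squared singular value of the m x |S| matrix whose columns are the
  columns of B indexed by S, rescaled to unit length:
  min over unit coefficient vectors c of the squared norm of N c.\<close>
definition sigma_min :: "real^'n^'m \<Rightarrow> 'n set \<Rightarrow> real" where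
  "sigma_min B S = Inf {(norm (\<Sum>j\<in>S. c j *\<^sub>R ((1 / norm (column j B)) *\<^sub>R column j B)))\<^sup>2
                        | c. (\<Sum>j\<in>S. (c j)\<^sup>2) = 1}"

text \<open>One greedy step on candidate column indices C (of B), current selection S;
  ties broken by least rank rk (a fixed injective ranking of column indices).\<close>
definition greedy_step :: "real^'na^'m \<Rightarrow> real^'n^'m \<Rightarrow> ('n \<Rightarrow> nat) \<Rightarrow> 'n set \<Rightarrow> 'n set \<Rightarrow> 'n set" where
  "greedy_step A B rk C S =
     (if C - S = {} then S
      else (let M = {c \<in> C - S. \<forall>d \<in> C - S. fM A (cols B (insert d S)) \<le> fM A (cols B (insert c S))}
            in insert (arg_min_on rk M) S))"

definition greedy :: "real^'na^'m \<Rightarrow> real^'n^'m \<Rightarrow> ('n \<Rightarrow> nat) \<Rightarrow> 'n set \<Rightarrow> nat \<Rightarrow> 'n set" where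
  "greedy A B rk C r = (greedy_step A B rk C ^^ r) {}"

end

theory Submission
  imports Defs
begin

text \<open>
  Fix a part \<open>C = T\<^sub>i\<close> and let \<open>P = OPT\<^sub>i\<^sup>N\<^sup>S\<close>. For the current greedy selection \<open>S\<close> let
  \<open>r\<^sub>j = a\<^sub>j - \<Pi>\<^sub>S a\<^sub>j\<close> be the residuals of the columns of \<open>A\<close>, and let \<open>u\<^sub>x\<close> be column \<open>x\<close>
  of \<open>B\<close> normalised; adding \<open>x\<close> to \<open>S\<close> raises \<open>f\<^sub>A\<close> by at least \<open>\<Sum>\<^sub>j (r\<^sub>j \<bullet> u\<^sub>x)\<^sup>2\<close>.
  Since no \<open>x \<in> P\<close> is ever picked by greedy on \<open>C \<union> {x}\<close>, greedy on \<open>C\<close> makes the same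
  choices for \<open>k'\<close> steps, and each of its steps gains at least as much as adding \<open>x\<close>
  would. As long as \<open>f\<^sub>A(S) \<le> f\<^sub>A(P)/2\<close>, the residuals keep at least \<open>f\<^sub>A(P)/12\<close> of their
  mass in \<open>span P\<close>, and the singular value bound turns this into
  \<open>\<Sum>\<^sub>x\<^sub>\<in>\<^sub>P \<Sum>\<^sub>j (r\<^sub>j \<bullet> u\<^sub>x)\<^sup>2 \<ge> \<sigma>\<^sub>m\<^sub>i\<^sub>n f\<^sub>A(P) / 12\<close>. So every step gains at least
  \<open>\<sigma>\<^sub>m\<^sub>i\<^sub>n f\<^sub>A(P) / (12k)\<close>, and \<open>k' = 32k/\<sigma>\<^sub>m\<^sub>i\<^sub>n\<close> steps cannot all stay below \<open>f\<^sub>A(P)/2\<close>.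
\<close>

lemma orthogonal_decomposition_unique:
  assumes "p \<in> span V" and "\<forall>v\<in>span V. (a - p) \<bullet> v = 0"
    and "q \<in> span V" and "\<forall>v\<in>span V. (a - q) \<bullet> v = 0"
  shows "p = q"
proof -
  have "p - q \<in> span V" using assms(1,3) by (rule span_diff)
  then have "(a - q) \<bullet> (p - q) - (a - p) \<bullet> (p - q) = 0" using assms(2,4) by simp
  then have "(p - q) \<bullet> (p - q) = 0" by (simp add: inner_diff_left)
  then show ?thesis by simp
qed

lemma proj_span_unique:
  assumes "p \<in> span V" and "\<forall>v\<in>span V. (a - p) \<bullet> v = 0"
  shows "proj_span V a = p"
  unfolding proj_span_def
  by (rule the_equality) (use assms orthogonal_decomposition_unique in blast)+

lemma proj_span_characterization:
  fixes V :: "'a::euclidean_space set"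
  shows "proj_span V a \<in> span V \<and> (\<forall>v\<in>span V. (a - proj_span V a) \<bullet> v = 0)"
proof -
  obtain y z where "y \<in> span V" and "\<And>w. w \<in> span V \<Longrightarrow> orthogonal z w" and "a = y + z"
    using orthogonal_subspace_decomp_exists[of V a] by metis
  then have "y \<in> span V \<and> (\<forall>v\<in>span V. (a - y) \<bullet> v = 0)" by (simp add: orthogonal_def)
  with proj_span_unique show ?thesis by metis
qed

lemma proj_span_in_span: "proj_span V a \<in> span V"
  using proj_span_characterization by blast

lemma proj_span_orthogonal: "v \<in> span V \<Longrightarrow> (a - proj_span V a) \<bullet> v = 0"
  using proj_span_characterization by blast

lemma norm_proj_span_power2: "(norm (proj_span V a))\<^sup>2 = a \<bullet> proj_span V a"
proof -
  have "(a - proj_span V a) \<bullet> proj_span V a = 0"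
    by (rule proj_span_orthogonal[OF proj_span_in_span])
  then show ?thesis by (simp add: inner_diff_left power2_norm_eq_inner)
qed

lemma norm_proj_span_le: "norm (proj_span V a) \<le> norm a"
proof -
  have "norm (proj_span V a) * norm (proj_span V a) \<le> norm a * norm (proj_span V a)"
    using norm_proj_span_power2[of V a] Cauchy_Schwarz_ineq2[of a "proj_span V a"]
    by (simp add: power2_eq_square)
  then show ?thesis
    by (cases "proj_span V a = 0") (auto simp: mult_le_cancel_right)
qed

lemma proj_span_diff: "proj_span V (a - b) = proj_span V a - proj_span V b"
proof (rule proj_span_unique)
  show "proj_span V a - proj_span V b \<in> span V"
    using span_diff[OF proj_span_in_span proj_span_in_span] .
  show "\<forall>v\<in>span V. (a - b - (proj_span V a - proj_span V b)) \<bullet> v = 0"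
    using proj_span_orthogonal[of _ V a] proj_span_orthogonal[of _ V b]
    by (simp add: algebra_simps inner_diff_left)
qed

lemma norm_proj_span_pythagoras:
  assumes "V \<subseteq> span W"
  shows "(norm (proj_span W a))\<^sup>2
           = (norm (proj_span V a))\<^sup>2 + (norm (proj_span W a - proj_span V a))\<^sup>2"
proof -
  let ?v = "proj_span V a" and ?w = "proj_span W a"
  have "?v \<in> span W" using proj_span_in_span span_minimal[OF assms subspace_span] by blast
  then have "(a - ?w) \<bullet> ?v = 0" by (rule proj_span_orthogonal)
  then have "?v \<bullet> (?w - ?v) = 0"
    using norm_proj_span_power2[of V a]
    by (simp add: inner_diff_left inner_diff_right inner_commute power2_norm_eq_inner)
  then show ?thesis
    using norm_add_Pythagorean[of ?v "?w - ?v"] by (simp add: orthogonal_def)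
qed

lemma inner_residual_power2_le:
  assumes "V \<subseteq> span W" and "u \<in> span W"
  shows "((a - proj_span V a) \<bullet> u)\<^sup>2
           \<le> ((norm (proj_span W a))\<^sup>2 - (norm (proj_span V a))\<^sup>2) * (norm u)\<^sup>2"
proof -
  let ?v = "proj_span V a" and ?w = "proj_span W a"
  have "(a - ?w) \<bullet> u = 0" using proj_span_orthogonal[OF assms(2)] .
  then have "(a - ?v) \<bullet> u = (?w - ?v) \<bullet> u" by (simp add: inner_diff_left)
  moreover have "((?w - ?v) \<bullet> u)\<^sup>2 \<le> (norm (?w - ?v))\<^sup>2 * (norm u)\<^sup>2"
    using Cauchy_Schwarz_ineq[of "?w - ?v" u] by (simp add: power2_norm_eq_inner)
  ultimately show ?thesis using norm_proj_span_pythagoras[OF assms(1), of a] by simp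
qed

lemma fM_nonneg: "0 \<le> fM A V"
  by (simp add: fM_def sum_nonneg)

lemma fM_empty: "fM A (cols B {}) = 0"
  using proj_span_in_span[of "cols B {}"] by (simp add: fM_def cols_def)

lemma fM_mono:
  assumes "V \<subseteq> span W"
  shows "fM A V \<le> fM A W"
  unfolding fM_def by (intro sum_mono) (subst norm_proj_span_pythagoras[OF assms], simp)

lemma cols_subset_span_cols:
  assumes "S \<subseteq> S'"
  shows "cols B S \<subseteq> span (cols B S')"
proof -
  have "cols B S \<subseteq> cols B S'" using assms unfolding cols_def by (rule image_mono)
  then show ?thesis using span_superset by (rule order_trans)
qed

definition unit_column :: "real^'n^'m \<Rightarrow> 'n \<Rightarrow> real^'m" where
  "unit_column B x = (1 / norm (column x B)) *\<^sub>R column x B"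

lemma norm_unit_column: "column x B \<noteq> 0 \<Longrightarrow> norm (unit_column B x) = 1"
  by (simp add: unit_column_def)

lemma unit_column_in_span_cols:
  assumes "x \<in> S"
  shows "unit_column B x \<in> span (cols B S)"
proof -
  have "column x B \<in> cols B S" using assms by (simp add: cols_def)
  then show ?thesis unfolding unit_column_def by (rule span_mul[OF span_base])
qed

lemma fM_insert_gain:
  assumes "column x B \<noteq> 0"
  shows "(\<Sum>j\<in>UNIV. ((column j A - proj_span (cols B S) (column j A)) \<bullet> unit_column B x)\<^sup>2)
           \<le> fM A (cols B (insert x S)) - fM A (cols B S)"
proof -
  have S: "cols B S \<subseteq> span (cols B (insert x S))" by (rule cols_subset_span_cols) auto
  have x: "unit_column B x \<in> span (cols B (insert x S))"
    by (rule unit_column_in_span_cols) simp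
  show ?thesis
    unfolding fM_def sum_subtractf[symmetric]
    by (rule sum_mono) (use inner_residual_power2_le[OF S x] norm_unit_column[OF assms] in simp)
qed

lemma span_cols_eq_unit_combination:
  assumes "\<forall>j. column j B \<noteq> 0" and "w \<in> span (cols B S)"
  shows "\<exists>c. w = (\<Sum>x\<in>S. c x *\<^sub>R unit_column B x)"
  using assms(2)
proof (induction rule: span_induct_alt)
  case base
  show ?case by (rule exI[of _ "\<lambda>_. 0"]) simp
next
  case (step a v y)
  then obtain c where c: "y = (\<Sum>x\<in>S. c x *\<^sub>R unit_column B x)" by blast
  from step(1) obtain z where z: "z \<in> S" "v = column z B" unfolding cols_def by blast
  have v: "v = norm v *\<^sub>R unit_column B z"
    using z assms(1) by (simp add: unit_column_def)
  define c' where "c' x = c x + (if x = z then a * norm v else 0)" for x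
  have "(\<Sum>x\<in>S. c' x *\<^sub>R unit_column B x) = y + (a * norm v) *\<^sub>R unit_column B z"
    using z(1)
    by (simp add: c'_def c scaleR_add_left sum.distrib if_distrib[of "\<lambda>s. s *\<^sub>R _"] cong: if_cong)
  also have "\<dots> = a *\<^sub>R v + y" by (subst (2) v) simp
  finally show ?case by (intro exI[of _ c']) simp
qed

lemma sigma_min_le_combination:
  assumes "S \<subseteq> OPT" and "w = (\<Sum>x\<in>S. c x *\<^sub>R unit_column B x)"
  shows "sigma_min B OPT * (\<Sum>x\<in>S. (c x)\<^sup>2) \<le> (norm w)\<^sup>2"
proof (cases "(\<Sum>x\<in>S. (c x)\<^sup>2) = 0")
  case False
  define s where "s = (\<Sum>x\<in>S. (c x)\<^sup>2)"
  have s: "s > 0" using False unfolding s_def by (simp add: sum_nonneg order.not_eq_order_implies_strict)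
  define d where "d y = (if y \<in> S then c y / sqrt s else 0)" for y
  have "(\<Sum>y\<in>OPT. (d y)\<^sup>2) = (\<Sum>y\<in>S. (c y)\<^sup>2 / s)"
    using assms(1) s
    by (auto simp: d_def power_divide intro!: sum.mono_neutral_cong_right)
  also have "\<dots> = 1" using s unfolding s_def by (simp add: sum_divide_distrib[symmetric])
  finally have d_unit: "(\<Sum>y\<in>OPT. (d y)\<^sup>2) = 1" .
  have "(\<Sum>y\<in>OPT. d y *\<^sub>R unit_column B y) = (\<Sum>y\<in>S. (1 / sqrt s) *\<^sub>R (c y *\<^sub>R unit_column B y))"
    using assms(1) by (auto simp: d_def intro!: sum.mono_neutral_cong_right)
  also have "\<dots> = (1 / sqrt s) *\<^sub>R w" using assms(2) by (simp add: scaleR_sum_right)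
  finally have "(norm w)\<^sup>2 / s
      \<in> {(norm (\<Sum>j\<in>OPT. c j *\<^sub>R ((1 / norm (column j B)) *\<^sub>R column j B)))\<^sup>2
           | c. (\<Sum>j\<in>OPT. (c j)\<^sup>2) = 1}"
    using s d_unit unfolding unit_column_def by (auto simp: power_divide intro!: exI[of _ d])
  then have "sigma_min B OPT \<le> (norm w)\<^sup>2 / s"
    unfolding sigma_min_def by (rule cInf_lower) (auto intro: bdd_belowI[of _ 0])
  then show ?thesis using s unfolding s_def by (simp add: pos_le_divide_eq)
qed simp

lemma sigma_min_inner_bound:
  assumes "\<forall>j. column j B \<noteq> 0" and "0 \<le> sigma_min B OPT"
    and "S \<subseteq> OPT" and "w \<in> span (cols B S)"
  shows "sigma_min B OPT * (norm w)\<^sup>2 \<le> (\<Sum>x\<in>S. (w \<bullet> unit_column B x)\<^sup>2)"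
proof (cases "w = 0")
  case False
  obtain c where c: "w = (\<Sum>x\<in>S. c x *\<^sub>R unit_column B x)"
    using span_cols_eq_unit_combination[OF assms(1,4)] by blast
  define s where "s = (\<Sum>x\<in>S. (c x)\<^sup>2)"
  define Q where "Q = (\<Sum>x\<in>S. (w \<bullet> unit_column B x)\<^sup>2)"
  have "(norm w)\<^sup>2 = w \<bullet> (\<Sum>x\<in>S. c x *\<^sub>R unit_column B x)"
    unfolding power2_norm_eq_inner by (rule arg_cong[where f="inner w", OF c])
  also have "\<dots> = (\<Sum>x\<in>S. c x * (w \<bullet> unit_column B x))" by (simp add: inner_sum_right)
  finally have "(norm w)\<^sup>2 * (norm w)\<^sup>2 \<le> s * Q"
    unfolding s_def Q_def using Cauchy_Schwarz_ineq_sum by (metis power2_eq_square)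
  then have "sigma_min B OPT * (norm w)\<^sup>2 * (norm w)\<^sup>2 \<le> (sigma_min B OPT * s) * Q"
    using assms(2) by (simp add: mult_left_mono mult.assoc)
  also have "\<dots> \<le> (norm w)\<^sup>2 * Q"
    using sigma_min_le_combination[OF assms(3) c] unfolding s_def Q_def
    by (intro mult_right_mono) (simp_all add: sum_nonneg)
  finally show ?thesis using False unfolding Q_def by (simp add: mult.commute)
qed simp

lemma power2_add_le_weighted:
  fixes a b :: real
  shows "(a + b)\<^sup>2 \<le> 4 * a\<^sup>2 + 4/3 * b\<^sup>2"
proof -
  have "0 \<le> (3 * a - b)\<^sup>2" by simp
  then show ?thesis by (simp add: power2_eq_square algebra_simps)
qed

lemma norm_proj_span_power2_le_residual:
  "(norm (proj_span W a))\<^sup>2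
     \<le> 4 * (norm (proj_span W (a - proj_span V a)))\<^sup>2 + 4/3 * (norm (proj_span V a))\<^sup>2"
proof -
  let ?r = "proj_span W (a - proj_span V a)" and ?q = "proj_span W (proj_span V a)"
  have "norm (proj_span W a) \<le> norm ?r + norm ?q"
    using norm_triangle_ineq[of ?r ?q] by (simp add: proj_span_diff)
  also have "\<dots> \<le> norm ?r + norm (proj_span V a)"
    using norm_proj_span_le by (rule add_left_mono)
  finally have "(norm (proj_span W a))\<^sup>2 \<le> (norm ?r + norm (proj_span V a))\<^sup>2"
    by (simp add: power_mono)
  then show ?thesis using power2_add_le_weighted order_trans by blast
qed

lemma residual_correlation_lower_bound:
  assumes "\<forall>j. column j B \<noteq> 0" and "0 \<le> sigma_min B OPT" and "P \<subseteq> OPT"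
    and "fM A (cols B S) \<le> fM A (cols B P) / 2"
  shows "sigma_min B OPT * fM A (cols B P) / 12
           \<le> (\<Sum>x\<in>P. \<Sum>j\<in>UNIV. ((column j A - proj_span (cols B S) (column j A)) \<bullet> unit_column B x)\<^sup>2)"
proof -
  define r where "r j = column j A - proj_span (cols B S) (column j A)" for j
  define w where "w j = proj_span (cols B P) (r j)" for j
  have correlation: "sigma_min B OPT * (norm (w j))\<^sup>2 \<le> (\<Sum>x\<in>P. (r j \<bullet> unit_column B x)\<^sup>2)" for j
  proof -
    have "w j \<bullet> unit_column B x = r j \<bullet> unit_column B x" if "x \<in> P" for x
      using proj_span_orthogonal[OF unit_column_in_span_cols[OF that, of B], of "r j"]
      unfolding w_def by (simp add: inner_diff_left)
    then show ?thesis
      using sigma_min_inner_bound[OF assms(1-3) proj_span_in_span, of "r j"]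
      unfolding w_def by simp
  qed
  have "fM A (cols B P)
      \<le> (\<Sum>j\<in>UNIV. 4 * (norm (w j))\<^sup>2 + 4/3 * (norm (proj_span (cols B S) (column j A)))\<^sup>2)"
    unfolding fM_def w_def r_def by (rule sum_mono) (rule norm_proj_span_power2_le_residual)
  also have "\<dots> = 4 * (\<Sum>j\<in>UNIV. (norm (w j))\<^sup>2) + 4/3 * fM A (cols B S)"
    unfolding fM_def by (simp add: sum.distrib sum_distrib_left)
  finally have "fM A (cols B P) / 12 \<le> (\<Sum>j\<in>UNIV. (norm (w j))\<^sup>2)"
    using assms(4) by linarith
  then have "sigma_min B OPT * fM A (cols B P) / 12
      \<le> (\<Sum>j\<in>UNIV. sigma_min B OPT * (norm (w j))\<^sup>2)"
    using mult_left_mono[OF _ assms(2)] by (fastforce simp: sum_distrib_left[symmetric])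
  also have "\<dots> \<le> (\<Sum>j\<in>UNIV. \<Sum>x\<in>P. (r j \<bullet> unit_column B x)\<^sup>2)"
    by (rule sum_mono) (rule correlation)
  finally show ?thesis unfolding r_def by (subst (asm) sum.swap)
qed

lemma arg_min_on_subset:
  fixes f :: "'a \<Rightarrow> 'b::linorder"
  assumes "inj_on f M'" and "finite M'" and "M \<subseteq> M'" and "arg_min_on f M' \<in> M"
  shows "arg_min_on f M = arg_min_on f M'"
proof -
  have "M \<noteq> {}" "M' \<noteq> {}" "finite M" using assms(2-4) finite_subset by auto
  then have "arg_min_on f M \<in> M'" using assms(3) arg_min_if_finite(1) by blast
  then have "f (arg_min_on f M) = f (arg_min_on f M')"
    using arg_min_least[OF \<open>finite M\<close> \<open>M \<noteq> {}\<close> assms(4), where f=f]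
      arg_min_least[OF assms(2) \<open>M' \<noteq> {}\<close>, where f=f] by (simp add: order.antisym)
  then show ?thesis
    using inj_onD[OF assms(1)] \<open>arg_min_on f M \<in> M'\<close> assms(3,4) by blast
qed

definition best_additions :: "real^'na^'m \<Rightarrow> real^'n^'m \<Rightarrow> 'n set \<Rightarrow> 'n set \<Rightarrow> 'n set" where
  "best_additions A B C S =
     {c \<in> C - S. \<forall>d \<in> C - S. fM A (cols B (insert d S)) \<le> fM A (cols B (insert c S))}"

lemma greedy_step_eq_best_addition:
  "C - S \<noteq> {} \<Longrightarrow> greedy_step A B rk C S = insert (arg_min_on rk (best_additions A B C S)) S"
  by (simp add: greedy_step_def best_additions_def)

lemma best_additions_nonempty:
  assumes "C - S \<noteq> {}"
  shows "best_additions A B C S \<noteq> {}"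
proof -
  define g where "g d = fM A (cols B (insert d S))" for d
  have "Max (g ` (C - S)) \<in> g ` (C - S)" using assms by simp
  then obtain c where "c \<in> C - S" "g c = Max (g ` (C - S))" by auto
  then have "c \<in> best_additions A B C S" unfolding best_additions_def g_def[symmetric] by simp
  then show ?thesis by blast
qed

lemma best_additions_remove_insert:
  assumes "c \<in> best_additions A B (insert x C) S" and "c \<in> C"
  shows "c \<in> best_additions A B C S"
    and "best_additions A B C S \<subseteq> best_additions A B (insert x C) S"
proof -
  have c_best: "\<forall>d \<in> insert x C - S. fM A (cols B (insert d S)) \<le> fM A (cols B (insert c S))"
    and "c \<notin> S"
    using assms(1) unfolding best_additions_def by blast+
  then show "c \<in> best_additions A B C S" using assms(2) unfolding best_additions_def by blast
  show "best_additions A B C S \<subseteq> best_additions A B (insert x C) S"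
  proof
    fix m assume "m \<in> best_additions A B C S"
    then have m: "m \<in> C - S" and "fM A (cols B (insert c S)) \<le> fM A (cols B (insert m S))"
      using assms(2) \<open>c \<notin> S\<close> unfolding best_additions_def by blast+
    then have "fM A (cols B (insert d S)) \<le> fM A (cols B (insert m S))"
      if "d \<in> insert x C - S" for d
      using order_trans[OF bspec[OF c_best that]] by blast
    then show "m \<in> best_additions A B (insert x C) S" using m unfolding best_additions_def by blast
  qed
qed

text \<open>If greedy on \<open>C \<union> {x}\<close> does not pick \<open>x\<close>, its choice \<open>c\<close> lies in \<open>C\<close> and is still the
  rank-least best addition from \<open>C\<close>; being best over \<open>C \<union> {x}\<close>, it beats \<open>x\<close>.\<close>

lemma greedy_step_insert_unchosen:
  assumes "inj rk" and "x \<notin> S" and "x \<notin> greedy_step A B rk (insert x C) S"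
  shows "greedy_step A B rk C S = greedy_step A B rk (insert x C) S"
    and "fM A (cols B (insert x S)) \<le> fM A (cols B (greedy_step A B rk C S))"
proof -
  define M' where "M' = best_additions A B (insert x C) S"
  define c where "c = arg_min_on rk M'"
  have "insert x C - S \<noteq> {}" using assms(2) by auto
  then have step': "greedy_step A B rk (insert x C) S = insert c S" and "M' \<noteq> {}"
    unfolding c_def M'_def by (simp_all add: greedy_step_eq_best_addition best_additions_nonempty)
  then have "c \<in> M'" unfolding c_def by (simp add: arg_min_if_finite(1))
  have "c \<noteq> x" using assms(3) step' by auto
  then have "c \<in> C" using \<open>c \<in> M'\<close> unfolding M'_def best_additions_def by blast
  have "\<forall>d \<in> insert x C - S. fM A (cols B (insert d S)) \<le> fM A (cols B (insert c S))"
    using \<open>c \<in> M'\<close> unfolding M'_def best_additions_def by blast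
  then have c_best: "fM A (cols B (insert x S)) \<le> fM A (cols B (insert c S))"
    using assms(2) by simp
  have "arg_min_on rk (best_additions A B C S) = c"
    unfolding c_def
  proof (rule arg_min_on_subset)
    show "inj_on rk M'" using assms(1) by (rule inj_on_subset) simp
    show "best_additions A B C S \<subseteq> M'" "arg_min_on rk M' \<in> best_additions A B C S"
      using best_additions_remove_insert[OF _ \<open>c \<in> C\<close>] \<open>c \<in> M'\<close> unfolding c_def M'_def by blast+
  qed simp
  moreover have "C - S \<noteq> {}" using \<open>c \<in> M'\<close> \<open>c \<in> C\<close> unfolding M'_def best_additions_def by blast
  ultimately have "greedy_step A B rk C S = insert c S"
    by (simp add: greedy_step_eq_best_addition)
  then show "greedy_step A B rk C S = greedy_step A B rk (insert x C) S"
    and "fM A (cols B (insert x S)) \<le> fM A (cols B (greedy_step A B rk C S))"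
    using step' c_best by simp_all
qed

lemma greedy_0 [simp]: "greedy A B rk C 0 = {}"
  by (simp add: greedy_def)

lemma greedy_Suc: "greedy A B rk C (Suc t) = greedy_step A B rk C (greedy A B rk C t)"
  by (simp add: greedy_def)

lemma greedy_mono: "t \<le> t' \<Longrightarrow> greedy A B rk C t \<subseteq> greedy A B rk C t'"
  by (rule lift_Suc_mono_le[of "greedy A B rk C"]) (auto simp: greedy_Suc greedy_step_def Let_def)

lemma greedy_insert_unchosen:
  assumes "inj rk" and "x \<notin> greedy A B rk (insert x C) N" and "t \<le> N"
  shows "greedy A B rk C t = greedy A B rk (insert x C) t"
  using assms(3)
proof (induction t)
  case (Suc t)
  have "x \<notin> greedy A B rk (insert x C) (Suc t)"
    using assms(2) greedy_mono[OF Suc.prems, of A B rk "insert x C"] by blast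
  moreover have "x \<notin> greedy A B rk (insert x C) t"
    using calculation greedy_mono[of t "Suc t" A B rk "insert x C"] by auto
  ultimately show ?case
    using greedy_step_insert_unchosen(1)[OF assms(1)] Suc by (simp add: greedy_Suc)
qed simp

lemma greedy_gain_ge_unchosen:
  assumes "inj rk" and "x \<notin> greedy A B rk (insert x C) N" and "t < N"
  shows "fM A (cols B (insert x (greedy A B rk C t))) \<le> fM A (cols B (greedy A B rk C (Suc t)))"
proof -
  have "x \<notin> greedy A B rk (insert x C) (Suc t)"
    using assms(2,3) greedy_mono[of "Suc t" N A B rk "insert x C"] by auto
  moreover have "x \<notin> greedy A B rk (insert x C) t"
    using calculation greedy_mono[of t "Suc t" A B rk "insert x C"] by auto
  ultimately show ?thesis
    using greedy_step_insert_unchosen(2)[OF assms(1)] greedy_insert_unchosen[OF assms(1,2), of t] assms(3)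
    by (simp add: greedy_Suc)
qed

lemma greedy_step_gain_lower_bound:
  assumes "\<forall>j. column j B \<noteq> 0" and "0 \<le> sigma_min B OPT" and "inj rk" and "P \<subseteq> OPT"
    and "\<forall>x\<in>P. x \<notin> greedy A B rk (insert x C) N" and "t < N"
    and "fM A (cols B (greedy A B rk C t)) \<le> fM A (cols B P) / 2"
  shows "sigma_min B OPT * fM A (cols B P) / 12
           \<le> card P * (fM A (cols B (greedy A B rk C (Suc t))) - fM A (cols B (greedy A B rk C t)))"
proof -
  let ?S = "greedy A B rk C t"
  have "sigma_min B OPT * fM A (cols B P) / 12
      \<le> (\<Sum>x\<in>P. \<Sum>j\<in>UNIV. ((column j A - proj_span (cols B ?S) (column j A)) \<bullet> unit_column B x)\<^sup>2)"
    by (rule residual_correlation_lower_bound[OF assms(1,2,4,7)])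
  also have "\<dots> \<le> (\<Sum>x\<in>P. fM A (cols B (insert x ?S)) - fM A (cols B ?S))"
    using fM_insert_gain assms(1) by (blast intro: sum_mono)
  also have "\<dots> \<le> (\<Sum>x\<in>P. fM A (cols B (greedy A B rk C (Suc t))) - fM A (cols B ?S))"
    using assms(5) by (intro sum_mono diff_right_mono greedy_gain_ge_unchosen[OF assms(3) _ assms(6)]) blast
  finally show ?thesis by simp
qed

lemma mono_steady_gain_reaches_half:
  fixes f :: "nat \<Rightarrow> real"
  assumes "mono f" and "0 \<le> f 0" and "0 < K" and "K \<le> 2 * real N * c"
    and gain: "\<And>t. t < N \<Longrightarrow> f t \<le> F / 2 \<Longrightarrow> c * F \<le> K * (f (Suc t) - f t)"
  shows "F / 2 \<le> f N"
proof (rule ccontr)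
  assume "\<not> F / 2 \<le> f N"
  then have below: "f N < F / 2" by simp
  then have "0 < F" using assms(1,2) monoD[of f 0 N] by linarith
  have "real N * (c * F) = (\<Sum>t<N. c * F)" by simp
  also have "\<dots> \<le> (\<Sum>t<N. K * (f (Suc t) - f t))"
  proof (rule sum_mono)
    fix t assume "t \<in> {..<N}"
    then show "c * F \<le> K * (f (Suc t) - f t)"
      using gain below monoD[OF assms(1), of t N] by simp
  qed
  also have "\<dots> = K * (f N - f 0)"
    by (simp add: sum_distrib_left[symmetric] sum_lessThan_telescope)
  also have "\<dots> < K * (F / 2)" using below assms(2,3) by simp
  also have "\<dots> \<le> real N * (c * F)"
    using mult_right_mono[OF assms(4), of "F / 2"] \<open>0 < F\<close> by simp
  finally show False by simp
qed

lemma greedy_ge_half_unchosen: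
  assumes "\<forall>j. column j B \<noteq> 0" and "inj rk" and "card OPT = k" and "0 < sigma_min B OPT"
    and "32 * real k / sigma_min B OPT \<le> real N"
  shows "fM A (cols B {x \<in> OPT. x \<notin> greedy A B rk (insert x C) N}) / 2
           \<le> fM A (cols B (greedy A B rk C N))"
proof (cases "{x \<in> OPT. x \<notin> greedy A B rk (insert x C) N} = {}")
  case True
  then show ?thesis by (simp only: fM_empty) (simp add: fM_nonneg)
next
  case False
  define P where "P = {x \<in> OPT. x \<notin> greedy A B rk (insert x C) N}"
  have "real (card P) \<le> real k" using assms(3) card_mono[of OPT P] by (simp add: P_def)
  also have "\<dots> \<le> 2 * real N * (sigma_min B OPT / 12)"
    using assms(4,5) by (simp add: field_simps)
  finally have size: "real (card P) \<le> 2 * real N * (sigma_min B OPT / 12)" .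
  have nonempty: "0 < real (card P)" using False by (simp add: P_def card_gt_0_iff)
  have mono: "mono (\<lambda>t. fM A (cols B (greedy A B rk C t)))"
    by (intro monoI fM_mono cols_subset_span_cols greedy_mono)
  show ?thesis
    unfolding P_def[symmetric]
  proof (rule mono_steady_gain_reaches_half[OF mono fM_nonneg nonempty size])
    fix t assume t: "t < N" and below: "fM A (cols B (greedy A B rk C t)) \<le> fM A (cols B P) / 2"
    have "sigma_min B OPT * fM A (cols B P) / 12
        \<le> real (card P) * (fM A (cols B (greedy A B rk C (Suc t))) - fM A (cols B (greedy A B rk C t)))"
      using assms(4) by (intro greedy_step_gain_lower_bound[OF assms(1) _ assms(2) _ _ t below])
        (auto simp: P_def)
    then show "sigma_min B OPT / 12 * fM A (cols B P)
        \<le> real (card P) * (fM A (cols B (greedy A B rk C (Suc t))) - fM A (cols B (greedy A B rk C t)))"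
      by simp
  qed
qed

theorem lemma3:
  fixes A :: "real^'na^'m" and B :: "real^'nb^'m"
    and rk :: "'nb \<Rightarrow> nat" and OPT :: "'nb set" and k :: nat
    and T :: "nat \<Rightarrow> 'nb set" and l :: nat
  assumes A_nz: "\<forall>j. column j A \<noteq> 0"
    and B_nz: "\<forall>j. column j B \<noteq> 0"
    and rk_inj: "inj rk"
    and OPT_card: "card OPT = k"
    and OPT_max: "\<forall>S. card S = k \<longrightarrow> fM A (cols B S) \<le> fM A (cols B OPT)"
    and sig_pos: "sigma_min B OPT > 0"
    and T_nonempty: "\<forall>i\<in>{1..l}. T i \<noteq> {}"
    and T_disj: "\<forall>i\<in>{1..l}. \<forall>j\<in>{1..l}. i \<noteq> j \<longrightarrow> T i \<inter> T j = {}"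
    and T_cover: "(\<Union>i\<in>{1..l}. T i) = UNIV"
  shows "\<forall>i\<in>{1..l}.
           fM A (cols B (greedy A B rk (T i) (nat \<lceil>32 * real k / sigma_min B OPT\<rceil>)))
             \<ge> fM A (cols B {x \<in> OPT. x \<notin> greedy A B rk (insert x (T i)) (nat \<lceil>32 * real k / sigma_min B OPT\<rceil>)}) / 2"
proof
  fix i
  have "32 * real k / sigma_min B OPT \<le> real (nat \<lceil>32 * real k / sigma_min B OPT\<rceil>)"
    by linarith
  then show "fM A (cols B (greedy A B rk (T i) (nat \<lceil>32 * real k / sigma_min B OPT\<rceil>)))
      \<ge> fM A (cols B {x \<in> OPT. x \<notin> greedy A B rk (insert x (T i)) (nat \<lceil>32 * real k / sigma_min B OPT\<rceil>)}) / 2"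
    using greedy_ge_half_unchosen[OF B_nz rk_inj OPT_card sig_pos] by simp
qed

end
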